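(* Let $V$ be a finite set of vertical lines and $H$ a finite set of horizontal closed segments in the plane. For a finite set $Q$ of points, let $H_Q\subseteq H$ be the set of segments of $H$ containing no point of $Q$, and let $h(\cdot)$ denote the minimum number of points needed to hit a set of horizontal segments. Suppose that (a) for every point $p$ lying on a line of $V$, $h(H_{\{p\}})=h(H)$, and (b) for every two points $p,q$ lying on two distinct lines of $V$, $h(H_{\{p,q\}})=h(H)$. Then every hitting set for $V\cup H$ has at least $|V|+h(H)$ points.
   Context: A hitting set for a family of subsets of the plane is a finite set of points such that every member contains at least one of the points. Segments may overlap arbitrarily. *)

theory Defs
  imports "HOL-Analysis.Analysis"
begin

type_synonym point = "real \<times> real"

definition vertical_line :: "point set \<Rightarrow> bool" where
  "vertical_line L \<longleftrightarrow> (\<exists>c. L = {p. fst p = c})"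

definition horizontal_segment :: "point set \<Rightarrow> bool" where
  "horizontal_segment S \<longleftrightarrow> (\<exists>a b y. a \<le> b \<and> S = {p. a \<le> fst p \<and> fst p \<le> b \<and> snd p = y})"

definition hitting_set :: "point set \<Rightarrow> point set set \<Rightarrow> bool" where
  "hitting_set P F \<longleftrightarrow> finite P \<and> (\<forall>S\<in>F. S \<inter> P \<noteq> {})"

definition hit_num :: "point set set \<Rightarrow> nat" where
  "hit_num F = (LEAST k. \<exists>P. hitting_set P F \<and> card P = k)"

definition avoiding :: "point set set \<Rightarrow> point set \<Rightarrow> point set set" where
  "avoiding H Q = {S \<in> H. S \<inter> Q = {}}"

end

theory Submission
  imports Defs
begin

text \<open>
  Fix one point of the hitting set on each line of V; these points have pairwise distinct
  x-coordinates. Adding them to Q one at a time from left to right never changes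
  h(H_Q): if the new point r has a predecessor q at the same height, the segments avoiding q
  that lie to the right of q on that height form a family separated from all other segments
  avoiding Q, and hypothesis (b) for {q, r} shows that removing the segments through r does
  not change its hitting number; without such a q the whole row of r plays this role,
  using hypothesis (a). Hence h(H_Q) = h(H), and the remaining points of the hitting set
  hit H_Q.
\<close>

lemma hitting_set_exists:
  assumes "finite F" "{} \<notin> F"
  shows "\<exists>P. hitting_set P F"
proof -
  have "\<forall>S\<in>F. S \<inter> (\<lambda>S. SOME p. p \<in> S) ` F \<noteq> {}"
    using assms(2) by (metis IntI all_not_in_conv image_eqI some_in_eq)
  then show ?thesis
    unfolding hitting_set_def using assms(1) by blast
qed

lemma hit_num_attained:
  assumes "finite F" "{} \<notin> F"
  obtains P where "hitting_set P F" "card P = hit_num F"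
proof -
  have "\<exists>k P. hitting_set P F \<and> card P = k"
    using hitting_set_exists[OF assms] by blast
  from LeastI_ex[OF this] show ?thesis
    using that unfolding hit_num_def by blast
qed

lemma hit_num_le: "hitting_set P F \<Longrightarrow> hit_num F \<le> card P"
  unfolding hit_num_def by (rule Least_le) blast

lemma hit_num_Un_separated:
  assumes "finite F1" "{} \<notin> F1" "finite F2" "{} \<notin> F2"
    and separated: "\<forall>S1\<in>F1. \<forall>S2\<in>F2. S1 \<inter> S2 = {}"
  shows "hit_num (F1 \<union> F2) = hit_num F1 + hit_num F2"
proof (rule antisym)
  obtain P1 where P1: "hitting_set P1 F1" "card P1 = hit_num F1"
    using hit_num_attained assms(1,2) .
  obtain P2 where P2: "hitting_set P2 F2" "card P2 = hit_num F2"
    using hit_num_attained assms(3,4) .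
  have "hitting_set (P1 \<union> P2) (F1 \<union> F2)"
    using P1 P2 unfolding hitting_set_def by blast
  then have "hit_num (F1 \<union> F2) \<le> card (P1 \<union> P2)" by (rule hit_num_le)
  also have "\<dots> \<le> card P1 + card P2" by (rule card_Un_le)
  finally show "hit_num (F1 \<union> F2) \<le> hit_num F1 + hit_num F2" using P1 P2 by simp
next
  obtain P where P: "hitting_set P (F1 \<union> F2)" "card P = hit_num (F1 \<union> F2)"
    using hit_num_attained[of "F1 \<union> F2"] assms(1-4) by blast
  have "finite P" using P unfolding hitting_set_def by blast
  have "hitting_set (P \<inter> \<Union>F1) F1" "hitting_set (P \<inter> \<Union>F2) F2"
    using P \<open>finite P\<close> unfolding hitting_set_def by blast+
  then have "hit_num F1 + hit_num F2 \<le> card (P \<inter> \<Union>F1) + card (P \<inter> \<Union>F2)"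
    by (intro add_mono hit_num_le)
  also have "\<dots> = card (P \<inter> \<Union>F1 \<union> P \<inter> \<Union>F2)"
    using separated \<open>finite P\<close> by (intro card_Un_disjoint[symmetric]) blast+
  also have "\<dots> \<le> card P" using \<open>finite P\<close> by (intro card_mono) blast+
  finally show "hit_num F1 + hit_num F2 \<le> hit_num (F1 \<union> F2)" using P by simp
qed

text \<open>
  No segment avoiding B crosses the boundary of the region R, so the segments inside R
  decouple from the other segments avoiding Z.
\<close>

lemma hit_num_avoiding_split:
  assumes "finite H" "{} \<notin> H"
    and sealed: "\<forall>S\<in>H. S \<inter> B = {} \<longrightarrow> S \<inter> R \<noteq> {} \<longrightarrow> S \<subseteq> R"
    and "B \<subseteq> Z" "Z \<inter> R = {}" "Y \<subseteq> R"
  shows "hit_num (avoiding H (Y \<union> Z)) =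
    hit_num (avoiding H Z - {S\<in>H. S \<subseteq> R}) + hit_num (avoiding {S\<in>H. S \<subseteq> R} Y)"
proof -
  let ?outside = "avoiding H Z - {S\<in>H. S \<subseteq> R}"
  have outside_disjoint: "S \<inter> R = {}" if "S \<in> ?outside" for S
    using sealed that \<open>B \<subseteq> Z\<close> unfolding avoiding_def by blast
  have "avoiding H (Y \<union> Z) = ?outside \<union> avoiding {S\<in>H. S \<subseteq> R} Y"
    using outside_disjoint \<open>Y \<subseteq> R\<close> \<open>Z \<inter> R = {}\<close> unfolding avoiding_def by blast
  moreover have "hit_num (?outside \<union> avoiding {S\<in>H. S \<subseteq> R} Y) =
      hit_num ?outside + hit_num (avoiding {S\<in>H. S \<subseteq> R} Y)"
    using assms(1,2) outside_disjoint
    by (intro hit_num_Un_separated) (auto simp: avoiding_def)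
  ultimately show ?thesis by simp
qed

text \<open>
  The part inside R is the same for B and for Z, so the effect of adding r \<in> R can be
  measured with B in place of Z.
\<close>

lemma hit_num_avoiding_insert_sealed:
  assumes "finite H" "{} \<notin> H"
    and sealed: "\<forall>S\<in>H. S \<inter> B = {} \<longrightarrow> S \<inter> R \<noteq> {} \<longrightarrow> S \<subseteq> R"
    and "r \<in> R" "B \<subseteq> Z" "Z \<inter> R = {}"
    and unchanged: "hit_num (avoiding H (insert r B)) = hit_num (avoiding H B)"
  shows "hit_num (avoiding H (insert r Z)) = hit_num (avoiding H Z)"
proof -
  have "B \<inter> R = {}" using assms(5,6) by blast
  note split_B = hit_num_avoiding_split[OF assms(1-3) order_refl this]
  note split_Z = hit_num_avoiding_split[OF assms(1-3,5,6)]
  have "hit_num (avoiding {S\<in>H. S \<subseteq> R} {r}) = hit_num (avoiding {S\<in>H. S \<subseteq> R} {})"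
    using unchanged split_B[of "{r}"] split_B[of "{}"] \<open>r \<in> R\<close> by simp
  then show ?thesis
    using split_Z[of "{r}"] split_Z[of "{}"] \<open>r \<in> R\<close> by simp
qed

lemma horizontal_segment_nonempty: "horizontal_segment S \<Longrightarrow> S \<noteq> {}"
  unfolding horizontal_segment_def by force

lemma horizontal_segment_row:
  assumes "horizontal_segment S" "S \<inter> {p. snd p = y} \<noteq> {}"
  shows "S \<subseteq> {p. snd p = y}"
  using assms unfolding horizontal_segment_def by auto

lemma horizontal_segment_right_ray:
  assumes "horizontal_segment S" "q \<notin> S"
    and "S \<inter> {p. snd p = snd q \<and> fst q < fst p} \<noteq> {}"
  shows "S \<subseteq> {p. snd p = snd q \<and> fst q < fst p}"
proof -
  obtain a b y where S: "S = {p. a \<le> fst p \<and> fst p \<le> b \<and> snd p = y}"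
    using assms(1) unfolding horizontal_segment_def by blast
  obtain p where "p \<in> S" "snd p = snd q" "fst q < fst p" using assms(3) by blast
  with S assms(2) have "y = snd q" "fst q < a" by (auto simp: not_le)
  with S show ?thesis by auto
qed

lemma vertical_line_eqI:
  assumes "vertical_line L1" "vertical_line L2" "z \<in> L1" "w \<in> L2" "fst z = fst w"
  shows "L1 = L2"
  using assms unfolding vertical_line_def by auto

lemma hit_num_avoiding_insert_alone_in_row:
  assumes "finite H" and segments: "\<forall>S\<in>H. horizontal_segment S"
    and "\<forall>z\<in>Q. snd z \<noteq> snd r"
    and unchanged: "hit_num (avoiding H {r}) = hit_num H"
  shows "hit_num (avoiding H (insert r Q)) = hit_num (avoiding H Q)"
proof (rule hit_num_avoiding_insert_sealed[where B = "{}" and R = "{p. snd p = snd r}"])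
  show "{} \<notin> H" using segments horizontal_segment_nonempty by blast
  show "\<forall>S\<in>H. S \<inter> {} = {} \<longrightarrow> S \<inter> {p. snd p = snd r} \<noteq> {} \<longrightarrow> S \<subseteq> {p. snd p = snd r}"
    using segments horizontal_segment_row by blast
  have "avoiding H {} = H" by (simp add: avoiding_def)
  then show "hit_num (avoiding H (insert r {})) = hit_num (avoiding H {})"
    using unchanged by simp
qed (use assms in auto)

lemma hit_num_avoiding_insert_after_row_predecessor:
  assumes "finite H" and segments: "\<forall>S\<in>H. horizontal_segment S"
    and "q \<in> Q" "snd q = snd r" "fst q < fst r"
    and q_max: "\<forall>z\<in>Q. snd z = snd r \<longrightarrow> fst z \<le> fst q"
    and unchanged: "hit_num (avoiding H {q, r}) = hit_num (avoiding H {q})"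
  shows "hit_num (avoiding H (insert r Q)) = hit_num (avoiding H Q)"
proof (rule hit_num_avoiding_insert_sealed[where B = "{q}" and R = "{p. snd p = snd q \<and> fst q < fst p}"])
  show "{} \<notin> H" using segments horizontal_segment_nonempty by blast
  show "\<forall>S\<in>H. S \<inter> {q} = {} \<longrightarrow> S \<inter> {p. snd p = snd q \<and> fst q < fst p} \<noteq> {} \<longrightarrow>
      S \<subseteq> {p. snd p = snd q \<and> fst q < fst p}"
    using segments horizontal_segment_right_ray by blast
  show "Q \<inter> {p. snd p = snd q \<and> fst q < fst p} = {}"
    using q_max \<open>snd q = snd r\<close> by (auto simp: not_less)
  show "hit_num (avoiding H (insert r {q})) = hit_num (avoiding H {q})"
    using unchanged by (simp add: insert_commute)
qed (use assms in auto)

lemma hit_num_avoiding_insert_rightmost: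
  assumes "finite H" and segments: "\<forall>S\<in>H. horizontal_segment S"
    and lines: "\<forall>L\<in>V. vertical_line L"
    and a: "\<forall>L\<in>V. \<forall>p\<in>L. hit_num (avoiding H {p}) = hit_num H"
    and b: "\<forall>L1\<in>V. \<forall>L2\<in>V. L1 \<noteq> L2 \<longrightarrow> (\<forall>p\<in>L1. \<forall>q\<in>L2.
              hit_num (avoiding H {p, q}) = hit_num H)"
    and "finite Q" "Q \<subseteq> \<Union>V" "r \<in> \<Union>V" and rightmost: "\<forall>z\<in>Q. fst z < fst r"
  shows "hit_num (avoiding H (insert r Q)) = hit_num (avoiding H Q)"
proof -
  obtain Lr where Lr: "Lr \<in> V" "r \<in> Lr" using \<open>r \<in> \<Union>V\<close> by blast
  show ?thesis
  proof (cases "\<exists>z\<in>Q. snd z = snd r")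
    case True
    define row where "row = {z\<in>Q. snd z = snd r}"
    have "finite (fst ` row)" "fst ` row \<noteq> {}"
      using True \<open>finite Q\<close> unfolding row_def by auto
    then have "Max (fst ` row) \<in> fst ` row" by (rule Max_in)
    then obtain q where "Max (fst ` row) = fst q" "q \<in> row" by (rule imageE)
    then have q_max: "\<forall>z\<in>row. fst z \<le> fst q"
      using Max_ge \<open>finite (fst ` row)\<close> by (metis image_eqI)
    have "q \<in> Q" "snd q = snd r" using \<open>q \<in> row\<close> unfolding row_def by auto
    obtain Lq where Lq: "Lq \<in> V" "q \<in> Lq" using \<open>q \<in> Q\<close> \<open>Q \<subseteq> \<Union>V\<close> by blast
    have "fst q < fst r" using rightmost \<open>q \<in> Q\<close> by blast
    then have "Lq \<noteq> Lr" using Lq Lr lines unfolding vertical_line_def by auto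
    then have "hit_num (avoiding H {q, r}) = hit_num (avoiding H {q})"
      using a b Lq Lr by metis
    with q_max show ?thesis
      using \<open>q \<in> Q\<close> \<open>snd q = snd r\<close> \<open>fst q < fst r\<close> unfolding row_def
      by (intro hit_num_avoiding_insert_after_row_predecessor[OF \<open>finite H\<close> segments]) auto
  next
    case False
    then show ?thesis
      using a Lr by (intro hit_num_avoiding_insert_alone_in_row[OF \<open>finite H\<close> segments]) auto
  qed
qed

lemma hit_num_avoiding_transversal:
  assumes "finite H" "\<forall>S\<in>H. horizontal_segment S" "\<forall>L\<in>V. vertical_line L"
    and a: "\<forall>L\<in>V. \<forall>p\<in>L. hit_num (avoiding H {p}) = hit_num H"
    and b: "\<forall>L1\<in>V. \<forall>L2\<in>V. L1 \<noteq> L2 \<longrightarrow> (\<forall>p\<in>L1. \<forall>q\<in>L2.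
              hit_num (avoiding H {p, q}) = hit_num H)"
    and "finite Q" "inj_on fst Q" "Q \<subseteq> \<Union>V"
  shows "hit_num (avoiding H Q) = hit_num H"
  using \<open>finite Q\<close> \<open>inj_on fst Q\<close> \<open>Q \<subseteq> \<Union>V\<close>
proof (induction Q rule: finite_ranking_induct[where f = fst])
  case empty
  then show ?case by (simp add: avoiding_def)
next
  case (insert r Q)
  show ?case
  proof (cases "r \<in> Q")
    case True
    then show ?thesis using insert by (simp add: insert_absorb)
  next
    case False
    have "fst z < fst r" if "z \<in> Q" for z
    proof -
      have "fst z \<noteq> fst r"
        using insert.prems(1) that False unfolding inj_on_def by blast
      then show ?thesis using insert.hyps(2)[OF that] by simp
    qed
    then have "hit_num (avoiding H (insert r Q)) = hit_num (avoiding H Q)"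
      using insert.prems(2) insert.hyps(1)
      by (intro hit_num_avoiding_insert_rightmost[OF assms(1-5)]) auto
    also have "\<dots> = hit_num H"
      using insert.IH insert.prems by simp
    finally show ?thesis .
  qed
qed

lemma hitting_set_avoiding_Diff:
  assumes "hitting_set P H"
  shows "hitting_set (P - Q) (avoiding H Q)"
  unfolding hitting_set_def avoiding_def
proof (intro conjI ballI)
  show "finite (P - Q)" using assms unfolding hitting_set_def by simp
  fix S assume "S \<in> {S \<in> H. S \<inter> Q = {}}"
  then have "S \<inter> P \<noteq> {}" "S \<inter> Q = {}"
    using assms unfolding hitting_set_def by simp_all
  then show "S \<inter> (P - Q) \<noteq> {}" by blast
qed

lemma vertical_lines_transversal:
  assumes "\<forall>L\<in>V. vertical_line L" and hit: "\<forall>L\<in>V. L \<inter> P \<noteq> {}"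
  obtains Q where "Q \<subseteq> P" "Q \<subseteq> \<Union>V" "inj_on fst Q" "card Q = card V"
proof -
  obtain f where f: "\<forall>L\<in>V. f L \<in> P \<inter> L"
    using hit bchoice[of V "\<lambda>L p. p \<in> P \<inter> L"] by blast
  have same_line: "L1 = L2" if "L1 \<in> V" "L2 \<in> V" "fst (f L1) = fst (f L2)" for L1 L2
    using that f assms(1) by (intro vertical_line_eqI[of L1 L2 "f L1" "f L2"]) auto
  have "inj_on f V"
    by (rule inj_onI) (rule same_line; simp)
  have "inj_on fst (f ` V)"
  proof (rule inj_onI)
    fix z w assume "z \<in> f ` V" "w \<in> f ` V" "fst z = fst w"
    then obtain L1 L2 where "L1 \<in> V" "L2 \<in> V" "z = f L1" "w = f L2" by blast
    with same_line[of L1 L2] \<open>fst z = fst w\<close> show "z = w" by simp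
  qed
  moreover have "f ` V \<subseteq> P" "f ` V \<subseteq> \<Union>V" using f by blast+
  moreover have "card (f ` V) = card V" using \<open>inj_on f V\<close> by (rule card_image)
  ultimately show ?thesis using that by blast
qed

theorem mainTheorem11:
  fixes V H :: "point set set"
  assumes "finite V" and "\<forall>L\<in>V. vertical_line L"
    and "finite H" and "\<forall>S\<in>H. horizontal_segment S"
    and a: "\<forall>L\<in>V. \<forall>p\<in>L. hit_num (avoiding H {p}) = hit_num H"
    and b: "\<forall>L1\<in>V. \<forall>L2\<in>V. L1 \<noteq> L2 \<longrightarrow> (\<forall>p\<in>L1. \<forall>q\<in>L2.
              hit_num (avoiding H {p, q}) = hit_num H)"
    and "hitting_set P (V \<union> H)"
  shows "card P \<ge> card V + hit_num H"
proof -
  have "finite P" "\<forall>L\<in>V. L \<inter> P \<noteq> {}" "hitting_set P H"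
    using assms(7) unfolding hitting_set_def by simp_all
  then obtain Q where Q: "Q \<subseteq> P" "Q \<subseteq> \<Union>V" "inj_on fst Q" "card Q = card V"
    using vertical_lines_transversal assms(2) by metis
  have "finite Q" using \<open>Q \<subseteq> P\<close> \<open>finite P\<close> by (rule finite_subset)
  have "hit_num H = hit_num (avoiding H Q)"
    using hit_num_avoiding_transversal[OF assms(3,4,2) a b \<open>finite Q\<close>] Q by simp
  also have "\<dots> \<le> card (P - Q)"
    using hitting_set_avoiding_Diff[OF \<open>hitting_set P H\<close>] by (rule hit_num_le)
  also have "\<dots> = card P - card V"
    using card_Diff_subset[OF \<open>finite Q\<close> \<open>Q \<subseteq> P\<close>] Q by simp
  finally show ?thesis
    using card_mono[OF \<open>finite P\<close> \<open>Q \<subseteq> P\<close>] Q by simp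
qed

end
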